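(* Let $G$ be a group. Suppose $G$ has a $k$-paradoxical decomposition with translating sets $S_1,\ldots,S_k$ and an $l$-paradoxical decomposition with translating sets $T_1,\ldots,T_l$. Then $G$ has a $kl$-paradoxical decomposition with translating sets $\{S_iT_j: 1\le i\le k,\ 1\le j\le l\}$.
   Context: For $k\geq2$, $G$ admits a $k$-paradoxical decomposition with translating sets $S_1=\{g_{1,1},\ldots,g_{1,n_1}\},\ldots,S_k=\{g_{k,1},\ldots,g_{k,n_k}\}$ (finite subsets of $G$) if there are pairwise disjoint subsets $P_{i,j}$ ($1\le i\le k$, $1\le j\le n_i$) of $G$ such that $G=\bigcup_{j=1}^{n_i}P_{i,j}g_{i,j}$ for each $i$. $S_iT_j=\{st: s\in S_i, t\in T_j\}$. *)

theory Defs
  imports "HOL-Algebra.Coset"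
begin

text \<open>A k-paradoxical decomposition is the case card I = k.\<close>

definition paradoxical_decomposition ::
  "('a, 'b) monoid_scheme \<Rightarrow> 'i set \<Rightarrow> ('i \<Rightarrow> 'a set) \<Rightarrow> ('i \<Rightarrow> 'a \<Rightarrow> 'a set) \<Rightarrow> bool"
where
  "paradoxical_decomposition G I S P \<longleftrightarrow>
     (\<forall>i\<in>I. finite (S i) \<and> S i \<subseteq> carrier G) \<and>
     (\<forall>i\<in>I. \<forall>g\<in>S i. P i g \<subseteq> carrier G) \<and>
     (\<forall>i\<in>I. \<forall>g\<in>S i. \<forall>i'\<in>I. \<forall>g'\<in>S i'. (i, g) \<noteq> (i', g') \<longrightarrow> P i g \<inter> P i' g' = {}) \<and>
     (\<forall>i\<in>I. carrier G = (\<Union>g\<in>S i. P i g #>\<^bsub>G\<^esub> g))"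

definition has_paradoxical_decomposition ::
  "('a, 'b) monoid_scheme \<Rightarrow> 'i set \<Rightarrow> ('i \<Rightarrow> 'a set) \<Rightarrow> bool"
where
  "has_paradoxical_decomposition G I S \<longleftrightarrow>
     finite I \<and> card I \<ge> 2 \<and> (\<exists>P. paradoxical_decomposition G I S P)"

end

theory Submission
  imports Defs
begin

text \<open>Refine the pieces of the two decompositions: x lies in the piece of (i, j) at s t
  exactly when x is in the piece P i s and its translate x s is in the piece Q j t.
  Covering: any y is q t with q \<in> Q j t, and q is x s with x \<in> P i s, so y = x (s t).
  Disjointness: x determines (i, s) through the P-pieces, and then x s determines (j, t)
  through the Q-pieces.\<close>

definition product_pieces ::
  "('a, 'b) monoid_scheme \<Rightarrow> ('i \<Rightarrow> 'a set) \<Rightarrow> ('i \<Rightarrow> 'a \<Rightarrow> 'a set) \<Rightarrow>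
   ('j \<Rightarrow> 'a set) \<Rightarrow> ('j \<Rightarrow> 'a \<Rightarrow> 'a set) \<Rightarrow> 'i \<times> 'j \<Rightarrow> 'a \<Rightarrow> 'a set"
where
  "product_pieces G S P T Q = (\<lambda>(i, j) g.
     {x. \<exists>s\<in>S i. \<exists>t\<in>T j. g = s \<otimes>\<^bsub>G\<^esub> t \<and> x \<in> P i s \<and> x \<otimes>\<^bsub>G\<^esub> s \<in> Q j t})"

lemma mem_product_pieces:
  "x \<in> product_pieces G S P T Q (i, j) g \<longleftrightarrow>
     (\<exists>s\<in>S i. \<exists>t\<in>T j. g = s \<otimes>\<^bsub>G\<^esub> t \<and> x \<in> P i s \<and> x \<otimes>\<^bsub>G\<^esub> s \<in> Q j t)"
  by (simp add: product_pieces_def)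

lemma paradoxical_decompositionD:
  assumes "paradoxical_decomposition G I S P" and "i \<in> I"
  shows "finite (S i)" "S i \<subseteq> carrier G" "\<And>g. g \<in> S i \<Longrightarrow> P i g \<subseteq> carrier G"
    "carrier G = (\<Union>g\<in>S i. P i g #>\<^bsub>G\<^esub> g)"
  using assms unfolding paradoxical_decomposition_def by blast+

lemma product_pieces_subset_carrier:
  assumes "paradoxical_decomposition G I S P" and "i \<in> I"
  shows "product_pieces G S P T Q (i, j) g \<subseteq> carrier G"
  using assms unfolding paradoxical_decomposition_def product_pieces_def by fastforce

lemma product_pieces_disjoint:
  assumes P: "paradoxical_decomposition G I S P" and Q: "paradoxical_decomposition G J T Q"
    and "i \<in> I" "j \<in> J" "i' \<in> I" "j' \<in> J" and "((i, j), g) \<noteq> ((i', j'), g')"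
  shows "product_pieces G S P T Q (i, j) g \<inter> product_pieces G S P T Q (i', j') g' = {}"
proof (rule ccontr)
  assume "product_pieces G S P T Q (i, j) g \<inter> product_pieces G S P T Q (i', j') g' \<noteq> {}"
  then obtain x where "x \<in> product_pieces G S P T Q (i, j) g" "x \<in> product_pieces G S P T Q (i', j') g'"
    by blast
  then obtain s t s' t' where
    "s \<in> S i" "t \<in> T j" "g = s \<otimes>\<^bsub>G\<^esub> t" "x \<in> P i s" "x \<otimes>\<^bsub>G\<^esub> s \<in> Q j t" and
    "s' \<in> S i'" "t' \<in> T j'" "g' = s' \<otimes>\<^bsub>G\<^esub> t'" "x \<in> P i' s'" "x \<otimes>\<^bsub>G\<^esub> s' \<in> Q j' t'"
    unfolding mem_product_pieces by blast
  moreover from calculation have "(i, s) = (i', s')"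
    using P \<open>i \<in> I\<close> \<open>i' \<in> I\<close> unfolding paradoxical_decomposition_def by blast
  moreover from calculation have "(j, t) = (j', t')"
    using Q \<open>j \<in> J\<close> \<open>j' \<in> J\<close> unfolding paradoxical_decomposition_def by blast
  ultimately show False
    using \<open>((i, j), g) \<noteq> ((i', j'), g')\<close> by auto
qed

context monoid
begin

lemma product_pieces_cover:
  assumes P: "paradoxical_decomposition G I S P" and Q: "paradoxical_decomposition G J T Q"
    and "i \<in> I" "j \<in> J"
  shows "carrier G = (\<Union>g\<in>S i <#> T j. product_pieces G S P T Q (i, j) g #> g)"
proof
  show "(\<Union>g\<in>S i <#> T j. product_pieces G S P T Q (i, j) g #> g) \<subseteq> carrier G"
    using paradoxical_decompositionD(2)[OF P \<open>i \<in> I\<close>] paradoxical_decompositionD(2)[OF Q \<open>j \<in> J\<close>]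
      product_pieces_subset_carrier[OF P \<open>i \<in> I\<close>, of T Q j]
    by (fastforce simp: r_coset_def set_mult_def)
next
  show "carrier G \<subseteq> (\<Union>g\<in>S i <#> T j. product_pieces G S P T Q (i, j) g #> g)"
  proof
    fix y assume "y \<in> carrier G"
    then obtain t q where t: "t \<in> T j" "q \<in> Q j t" "y = q \<otimes> t"
      using paradoxical_decompositionD(4)[OF Q \<open>j \<in> J\<close>] unfolding r_coset_def by blast
    then have "q \<in> carrier G"
      using paradoxical_decompositionD(3)[OF Q \<open>j \<in> J\<close>] by blast
    then obtain s x where s: "s \<in> S i" "x \<in> P i s" "q = x \<otimes> s"
      using paradoxical_decompositionD(4)[OF P \<open>i \<in> I\<close>] unfolding r_coset_def by blast
    have "x \<in> carrier G" "s \<in> carrier G" "t \<in> carrier G"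
      using paradoxical_decompositionD(2,3)[OF P \<open>i \<in> I\<close>] paradoxical_decompositionD(2)[OF Q \<open>j \<in> J\<close>]
        s t by blast+
    then have "y = x \<otimes> (s \<otimes> t)"
      using s t by (simp add: m_assoc)
    moreover have "x \<in> product_pieces G S P T Q (i, j) (s \<otimes> t)"
      using s t unfolding mem_product_pieces by blast
    moreover have "s \<otimes> t \<in> S i <#> T j"
      using s t unfolding set_mult_def by blast
    ultimately show "y \<in> (\<Union>g\<in>S i <#> T j. product_pieces G S P T Q (i, j) g #> g)"
      unfolding r_coset_def by blast
  qed
qed

lemma paradoxical_decomposition_product:
  assumes P: "paradoxical_decomposition G I S P" and Q: "paradoxical_decomposition G J T Q"
  shows "paradoxical_decomposition G (I \<times> J) (\<lambda>(i, j). S i <#> T j) (product_pieces G S P T Q)"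
  unfolding paradoxical_decomposition_def split_paired_Ball_Sigma prod.case
proof (intro conjI ballI impI)
  show "finite (S i <#> T j)" if "i \<in> I" "j \<in> J" for i j
    using paradoxical_decompositionD(1)[OF P \<open>i \<in> I\<close>] paradoxical_decompositionD(1)[OF Q \<open>j \<in> J\<close>]
    by (simp add: set_mult_def)
  show "S i <#> T j \<subseteq> carrier G" if "i \<in> I" "j \<in> J" for i j
    using paradoxical_decompositionD(2)[OF P \<open>i \<in> I\<close>] paradoxical_decompositionD(2)[OF Q \<open>j \<in> J\<close>]
    by (rule set_mult_closed)
  show "product_pieces G S P T Q (i, j) g \<subseteq> carrier G" if "i \<in> I" for i j g
    using P that by (rule product_pieces_subset_carrier)
  show "product_pieces G S P T Q (i, j) g \<inter> product_pieces G S P T Q (i', j') g' = {}"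
    if "i \<in> I" "j \<in> J" "i' \<in> I" "j' \<in> J" "((i, j), g) \<noteq> ((i', j'), g')" for i j g i' j' g'
    using P Q that by (rule product_pieces_disjoint)
  show "carrier G = (\<Union>g\<in>S i <#> T j. product_pieces G S P T Q (i, j) g #> g)"
    if "i \<in> I" "j \<in> J" for i j
    using P Q that by (rule product_pieces_cover)
qed

lemma has_paradoxical_decomposition_product:
  assumes "has_paradoxical_decomposition G I S" and "has_paradoxical_decomposition G J T"
  shows "has_paradoxical_decomposition G (I \<times> J) (\<lambda>(i, j). S i <#> T j)"
proof -
  have "2 * 1 \<le> card I * card J"
    using assms unfolding has_paradoxical_decomposition_def by (intro mult_mono) auto
  then have "card (I \<times> J) \<ge> 2"
    by (simp add: card_cartesian_product)
  then show ?thesis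
    using assms paradoxical_decomposition_product
    unfolding has_paradoxical_decomposition_def by blast
qed

end

theorem lemma3p3:
  fixes G (structure) and k l :: nat
    and S T :: "nat \<Rightarrow> 'a set"
  assumes "group G"
    and "has_paradoxical_decomposition G {1..k} S"
    and "has_paradoxical_decomposition G {1..l} T"
  shows "has_paradoxical_decomposition G ({1..k} \<times> {1..l}) (\<lambda>(i, j). S i <#> T j)"
  using monoid.has_paradoxical_decomposition_product[OF group.is_monoid] assms .

end
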